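(* Let $\mathbb{T}$ be a bounded time scale, $\alpha=\inf\mathbb{T}$, $\beta=\rho(\sup\mathbb{T})$ with $\alpha\neq\beta$, let $a\in\mathbb{T}^{\kappa}$, and let $q$ be a real-valued continuous function. Consider the boundary value problem consisting of $$-y^{\Delta\Delta}(t)+q(t)\,y(a)=\lambda\, y^{\sigma}(t),\qquad t\in\mathbb{T}^{\kappa^{2}},$$ together with the boundary conditions $U(y)=0$, $V(y)=0$, where $$U(y)=a_{11}y(\alpha)+a_{12}y^{\Delta}(\alpha)+a_{21}y(\beta)+a_{22}y^{\Delta}(\beta),\qquad V(y)=b_{11}y(\alpha)+b_{12}y^{\Delta}(\alpha)+b_{21}y(\beta)+b_{22}y^{\Delta}(\beta),$$ with real coefficients $a_{ij},b_{ij}$ ($i,j=1,2$). Let $S(t,\lambda)$, $C(t,\lambda)$ be the solutions of the equation with $S(a,\lambda)=0$, $S^{\Delta}(a,\lambda)=1$, $C(a,\lambda)=1$, $C^{\Delta}(a,\lambda)=0$, and define $$\Delta(\lambda)=\det\begin{pmatrix}U(C) & V(C)\\ U(S) & V(S)\end{pmatrix}=U(C(\cdot,\lambda))V(S(\cdot,\lambda))-V(C(\cdot,\lambda))U(S(\cdot,\lambda)).$$ Then the zeros of $\Delta(\lambda)$ coincide with the eigenvalues of this boundary value problem (i.e. with the values $\lambda\in\mathbb{C}$ for which the problem has a nontrivial solution).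
   Context: For a time scale $\mathbb{T}$, $\sigma$ and $\rho$ are the forward and backward jump operators, $y^{\sigma}=y\circ\sigma$, $y^{\Delta}$ and $y^{\Delta\Delta}$ are the first and second delta derivatives, $\mathbb{T}^{\kappa}=\mathbb{T}\setminus(\rho(\sup\mathbb{T}),\sup\mathbb{T}]$, $\mathbb{T}^{\kappa^2}=(\mathbb{T}^{\kappa})^{\kappa}$. $\lambda\in\mathbb{C}$ is the spectral parameter. *)

theory Defs
  imports "HOL-Analysis.Analysis"
begin

definition time_scale :: "real set \<Rightarrow> bool" where
  "time_scale T \<longleftrightarrow> T \<noteq> {} \<and> closed T"

text \<open>Forward jump: sigma t = inf of points of T to the right of t (inf of the empty set = sup T,
  i.e. sigma of the maximum is the maximum itself).\<close>
definition sigma :: "real set \<Rightarrow> real \<Rightarrow> real" where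
  "sigma T t = (if \<exists>s\<in>T. s > t then Inf {s\<in>T. s > t} else t)"

text \<open>Backward jump: rho t = sup of points of T to the left of t (sup of the empty set = inf T).\<close>
definition rho :: "real set \<Rightarrow> real \<Rightarrow> real" where
  "rho T t = (if \<exists>s\<in>T. s < t then Sup {s\<in>T. s < t} else t)"

definition Tkappa :: "real set \<Rightarrow> real set" where
  "Tkappa T = T - {rho T (Sup T)<..Sup T}"

definition has_delta_derivative ::
  "real set \<Rightarrow> (real \<Rightarrow> complex) \<Rightarrow> complex \<Rightarrow> real \<Rightarrow> bool" where
  "has_delta_derivative T f D t \<longleftrightarrow> t \<in> Tkappa T \<and>
     (\<forall>\<epsilon>>0. \<exists>\<delta>>0. \<forall>s\<in>T. \<bar>s - t\<bar> < \<delta> \<longrightarrow>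
        cmod (f (sigma T t) - f s - D * complex_of_real (sigma T t - s)) \<le> \<epsilon> * \<bar>sigma T t - s\<bar>)"

definition delta_deriv :: "real set \<Rightarrow> (real \<Rightarrow> complex) \<Rightarrow> real \<Rightarrow> complex" where
  "delta_deriv T f t = (THE D. has_delta_derivative T f D t)"

definition is_solution ::
  "real set \<Rightarrow> (real \<Rightarrow> real) \<Rightarrow> real \<Rightarrow> complex \<Rightarrow> (real \<Rightarrow> complex) \<Rightarrow> bool" where
  "is_solution T q a lam y \<longleftrightarrow>
     (\<forall>t\<in>Tkappa T. \<exists>D. has_delta_derivative T y D t) \<and>
     (\<forall>t\<in>Tkappa (Tkappa T). \<exists>D. has_delta_derivative (Tkappa T) (delta_deriv T y) D t) \<and>
     (\<forall>t\<in>Tkappa (Tkappa T).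
        - delta_deriv (Tkappa T) (delta_deriv T y) t + complex_of_real (q t) * y a
          = lam * y (sigma T t))"

definition bform ::
  "real set \<Rightarrow> real \<Rightarrow> real \<Rightarrow> real \<Rightarrow> real \<Rightarrow> (real \<Rightarrow> complex) \<Rightarrow> complex" where
  "bform T c11 c12 c21 c22 y =
     complex_of_real c11 * y (Inf T) + complex_of_real c12 * delta_deriv T y (Inf T)
   + complex_of_real c21 * y (rho T (Sup T)) + complex_of_real c22 * delta_deriv T y (rho T (Sup T))"

definition is_eigenvalue ::
  "real set \<Rightarrow> (real \<Rightarrow> real) \<Rightarrow> real \<Rightarrow> real \<Rightarrow> real \<Rightarrow> real \<Rightarrow> real
   \<Rightarrow> real \<Rightarrow> real \<Rightarrow> real \<Rightarrow> real \<Rightarrow> complex \<Rightarrow> bool" where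
  "is_eigenvalue T q a a11 a12 a21 a22 b11 b12 b21 b22 lam \<longleftrightarrow>
     (\<exists>y. is_solution T q a lam y \<and> (\<exists>t\<in>T. y t \<noteq> 0) \<and>
          bform T a11 a12 a21 a22 y = 0 \<and> bform T b11 b12 b21 b22 y = 0)"

end

(*
  Solutions of the equation form a vector space (it is linear in y, including the nonlocal term
  q(t) y(a)), and a solution is determined on T by its initial data y(a), y^Delta(a). Indeed, if
  y(a) = y^Delta(a) = 0, the term q(t) y(a) drops out and z = y, w = y^Delta solve the first order
  system z^Delta = w, w^Delta = -lam z^sigma with zero data at a. Induction over the time scale,
  forward and backward from a, shows that z and w vanish: the jump formula handles scattered
  points, continuity handles dense limits, and next to a dense point a mean value inequality gives
  sup |z| <= h sup |w| <= h^2 |lam| sup |z| on an interval of length h, so z = w = 0 there once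
  h^2 |lam| < 1. Hence every solution equals y(a) C + y^Delta(a) S on T, and lam is an eigenvalue
  iff the linear system with matrix [U(C) U(S); V(C) V(S)] has a nonzero solution, i.e. iff
  Delta(lam) = 0.
*)
theory Submission
  imports Defs
begin

section \<open>Jump operators\<close>

lemma closed_subset_contains_Inf:
  fixes A :: "real set"
  assumes "closed T" "A \<subseteq> T" "A \<noteq> {}" "bdd_below A"
  shows "Inf A \<in> T"
  using closure_contains_Inf[OF assms(3,4)] closure_minimal[OF assms(2,1)] by blast

lemma closed_subset_contains_Sup:
  fixes A :: "real set"
  assumes "closed T" "A \<subseteq> T" "A \<noteq> {}" "bdd_above A"
  shows "Sup A \<in> T"
  using closure_contains_Sup[OF assms(3,4)] closure_minimal[OF assms(2,1)] by blast

lemma sigma_in: "closed T \<Longrightarrow> t \<in> T \<Longrightarrow> sigma T t \<in> T"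
  unfolding sigma_def by (auto intro!: closed_subset_contains_Inf bdd_belowI[of _ t])

lemma sigma_ge: "t \<le> sigma T t"
  unfolding sigma_def by (auto intro: cInf_greatest)

lemma sigma_le: "u \<in> T \<Longrightarrow> t < u \<Longrightarrow> sigma T t \<le> u"
  unfolding sigma_def by (auto intro!: cInf_lower bdd_belowI[of _ t])

lemma sigma_eqI:
  assumes "u \<in> T" "t < u" "\<And>v. v \<in> T \<Longrightarrow> t < v \<Longrightarrow> u \<le> v"
  shows "sigma T t = u"
  unfolding sigma_def using assms by (auto intro!: cInf_eq_minimum)

lemma rho_in: "closed T \<Longrightarrow> t \<in> T \<Longrightarrow> rho T t \<in> T"
  unfolding rho_def by (auto intro!: closed_subset_contains_Sup bdd_aboveI[of _ t])

lemma rho_le: "rho T t \<le> t"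
  unfolding rho_def by (auto intro: cSup_least)

lemma rho_ge: "u \<in> T \<Longrightarrow> u < t \<Longrightarrow> u \<le> rho T t"
  unfolding rho_def by (auto intro!: cSup_upper bdd_aboveI[of _ t])

lemma sigma_rho:
  assumes "closed T" "t \<in> T" "rho T t < t"
  shows "sigma T (rho T t) = t"
  using assms by (intro sigma_eqI) (auto dest: rho_ge[of _ T t])

lemma sigma_uminus: "sigma (uminus ` T) t = - rho T (- t)"
proof -
  have "{s \<in> uminus ` T. t < s} = uminus ` {s\<in>T. s < - t}" by force
  then show ?thesis
    unfolding sigma_def rho_def Inf_real_def by (auto simp: image_image)
qed

lemma rho_uminus: "rho (uminus ` T) t = - sigma T (- t)"
proof -
  have "{s \<in> uminus ` T. s < t} = uminus ` {s\<in>T. - t < s}" by force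
  then show ?thesis
    unfolding sigma_def rho_def Inf_real_def by (auto simp: image_image)
qed

lemma right_dense_approach:
  assumes "sigma T t = t" "u \<in> T" "t < u" "e > 0"
  shows "\<exists>v\<in>T. t < v \<and> v < t + e"
proof -
  have "{s\<in>T. t < s} \<noteq> {}" "bdd_below {s\<in>T. t < s}"
    using assms by (auto intro: bdd_belowI[of _ t])
  moreover have "Inf {s\<in>T. t < s} < t + e"
    using assms unfolding sigma_def by (auto split: if_splits)
  ultimately show ?thesis by (auto simp: cInf_less_iff)
qed

lemma left_dense_approach:
  assumes "rho T t = t" "u \<in> T" "u < t" "e > 0"
  shows "\<exists>v\<in>T. t - e < v \<and> v < t"
proof -
  have "{s\<in>T. s < t} \<noteq> {}" "bdd_above {s\<in>T. s < t}"
    using assms by (auto intro: bdd_aboveI[of _ t])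
  moreover have "t - e < Sup {s\<in>T. s < t}"
    using assms unfolding rho_def by (auto split: if_splits)
  ultimately show ?thesis by (auto simp: less_cSup_iff)
qed

lemma right_dense_islimpt:
  assumes "sigma T t = t" "b \<in> T" "t < b"
  shows "t islimpt {s\<in>T. t < s \<and> s \<le> b}"
proof (rule islimpt_approachable[THEN iffD2], intro allI impI)
  fix e :: real assume "e > 0"
  then have "min e (b - t) > 0" using assms by simp
  then obtain v where "v \<in> T" "t < v" "v < t + min e (b - t)"
    using right_dense_approach[OF assms] by blast
  then show "\<exists>v\<in>{s\<in>T. t < s \<and> s \<le> b}. v \<noteq> t \<and> dist v t < e"
    by (intro bexI[of _ v]) (auto simp: dist_real_def)
qed

lemma left_dense_islimpt:
  assumes "rho T t = t" "a \<in> T" "a < t"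
  shows "t islimpt {s\<in>T. a \<le> s \<and> s < t}"
proof (rule islimpt_approachable[THEN iffD2], intro allI impI)
  fix e :: real assume "e > 0"
  then have "min e (t - a) > 0" using assms by simp
  then obtain v where "v \<in> T" "t - min e (t - a) < v" "v < t"
    using left_dense_approach[OF assms] by blast
  then show "\<exists>v\<in>{s\<in>T. a \<le> s \<and> s < t}. v \<noteq> t \<and> dist v t < e"
    by (intro bexI[of _ v]) (auto simp: dist_real_def)
qed

section \<open>Induction over a time scale\<close>

lemma time_scale_induct [consumes 4, case_names start right_scattered right_dense left_dense]:
  assumes "closed T" "t0 \<in> T" "t \<in> T" "t0 \<le> t"
    and start: "P t0"
    and right_scattered: "\<And>t. t \<in> T \<Longrightarrow> t0 \<le> t \<Longrightarrow> P t \<Longrightarrow> t < sigma T t \<Longrightarrow> P (sigma T t)"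
    and right_dense: "\<And>t. t \<in> T \<Longrightarrow> t0 \<le> t \<Longrightarrow> P t \<Longrightarrow> sigma T t = t \<Longrightarrow> \<exists>u\<in>T. t < u \<Longrightarrow>
      \<exists>d>0. \<forall>s\<in>T. t < s \<and> s < t + d \<longrightarrow> P s"
    and left_dense: "\<And>t. t \<in> T \<Longrightarrow> t0 < t \<Longrightarrow> rho T t = t \<Longrightarrow>
      (\<forall>s\<in>T. t0 \<le> s \<and> s < t \<longrightarrow> P s) \<Longrightarrow> P t"
  shows "P t"
proof (rule ccontr)
  assume "\<not> P t"
  define A where "A = {s\<in>T. t0 \<le> s \<and> \<not> P s}"
  define m where "m = Inf A"
  have A: "A \<noteq> {}" "bdd_below A"
    using \<open>t \<in> T\<close> \<open>t0 \<le> t\<close> \<open>\<not> P t\<close> by (auto simp: A_def intro: bdd_belowI[of _ t0])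
  have "m \<in> T" unfolding m_def using \<open>closed T\<close> A by (intro closed_subset_contains_Inf) (auto simp: A_def)
  have "t0 \<le> m" unfolding m_def using A(1) by (auto simp: A_def intro: cInf_greatest)
  have below: "\<forall>s\<in>T. t0 \<le> s \<and> s < m \<longrightarrow> P s"
    using cInf_lower[OF _ A(2)] by (force simp: m_def A_def)
  txt \<open>The infimum \<open>m\<close> of the counterexamples satisfies \<open>P\<close>, so counterexamples accumulate
    at \<open>m\<close> from the right, which the right-dense step forbids.\<close>
  have "P m"
  proof (cases "m = t0")
    case False
    show ?thesis
    proof (cases "rho T m = m")
      case True
      then show ?thesis using left_dense \<open>m \<in> T\<close> \<open>t0 \<le> m\<close> False below by auto
    next
      case False
      then have "rho T m < m" using rho_le[of T m] by simp
      moreover have "t0 \<le> rho T m" using rho_ge \<open>t0 \<le> m\<close> \<open>m \<noteq> t0\<close> assms(2) by force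
      moreover have "rho T m \<in> T" using rho_in \<open>closed T\<close> \<open>m \<in> T\<close> by blast
      ultimately show ?thesis
        using right_scattered[of "rho T m"] below sigma_rho[OF \<open>closed T\<close> \<open>m \<in> T\<close>] by auto
    qed
  qed (use start in simp)
  then have "m \<notin> A" by (simp add: A_def)
  have approach: "\<exists>u\<in>A. m < u \<and> u < m + e" if "e > 0" for e
  proof -
    obtain u where "u \<in> A" "u < m + e"
      using cInf_less_iff[OF A, of "m + e"] \<open>e > 0\<close> by (auto simp: m_def)
    moreover have "m \<le> u" unfolding m_def using \<open>u \<in> A\<close> A(2) by (rule cInf_lower)
    ultimately show ?thesis using \<open>m \<notin> A\<close> by (metis order.not_eq_order_implies_strict)
  qed
  have "sigma T m = m"
  proof (rule ccontr)
    assume "sigma T m \<noteq> m"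
    then have "m < sigma T m" using sigma_ge[of m T] by simp
    then obtain u where "u \<in> A" "m < u" "u < sigma T m" using approach[of "sigma T m - m"] by auto
    then show False using sigma_le[of u T m] by (auto simp: A_def)
  qed
  moreover obtain u where "u \<in> A" "m < u" using approach[of 1] by auto
  ultimately obtain d where "d > 0" "\<forall>s\<in>T. m < s \<and> s < m + d \<longrightarrow> P s"
    using right_dense[OF \<open>m \<in> T\<close> \<open>t0 \<le> m\<close> \<open>P m\<close>] by (auto simp: A_def)
  then show False using approach[of d] by (auto simp: A_def)
qed

lemma time_scale_induct_backward [consumes 4, case_names start left_scattered left_dense right_dense]:
  assumes "closed T" "t0 \<in> T" "t \<in> T" "t \<le> t0"
    and start: "P t0"
    and left_scattered: "\<And>t. t \<in> T \<Longrightarrow> t \<le> t0 \<Longrightarrow> P t \<Longrightarrow> rho T t < t \<Longrightarrow> P (rho T t)"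
    and left_dense: "\<And>t. t \<in> T \<Longrightarrow> t \<le> t0 \<Longrightarrow> P t \<Longrightarrow> rho T t = t \<Longrightarrow> \<exists>u\<in>T. u < t \<Longrightarrow>
      \<exists>d>0. \<forall>s\<in>T. t - d < s \<and> s < t \<longrightarrow> P s"
    and right_dense: "\<And>t. t \<in> T \<Longrightarrow> t < t0 \<Longrightarrow> sigma T t = t \<Longrightarrow>
      (\<forall>s\<in>T. t < s \<and> s \<le> t0 \<longrightarrow> P s) \<Longrightarrow> P t"
  shows "P t"
proof -
  have "P (- s)" if "s \<in> uminus ` T" "- t0 \<le> s" for s
    using closed_negations[OF \<open>closed T\<close>] imageI[OF \<open>t0 \<in> T\<close>, of uminus] that
  proof (induction s rule: time_scale_induct)
    case start
    then show ?case using \<open>P t0\<close> by simp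
  next
    case (right_scattered t)
    then show ?case using left_scattered[of "- t"] by (auto simp: sigma_uminus)
  next
    case (right_dense t)
    then obtain d where "d > 0" "\<forall>s\<in>T. - t - d < s \<and> s < - t \<longrightarrow> P s"
      using left_dense[of "- t"] by (force simp: sigma_uminus)
    then show ?case by (intro exI[of _ d]) force
  next
    case (left_dense t)
    then show ?case using right_dense[of "- t"] by (force simp: rho_uminus)
  qed
  then show ?thesis using assms(3,4) by force
qed

section \<open>Delta derivatives\<close>

lemma Tkappa_subset: "Tkappa T \<subseteq> T"
  unfolding Tkappa_def by auto

lemma less_Sup_in_Tkappa: "t \<in> T \<Longrightarrow> t < Sup T \<Longrightarrow> t \<in> Tkappa T"
  unfolding Tkappa_def using rho_ge[of t T "Sup T"] by auto

lemma left_dense_in_Tkappa: "t \<in> T \<Longrightarrow> rho T t = t \<Longrightarrow> t \<in> Tkappa T"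
  using less_Sup_in_Tkappa[of t T] unfolding Tkappa_def by (cases "t < Sup T") auto

lemma le_0_if_le_all_pos_mult:
  fixes x c :: real
  assumes "\<And>e. e > 0 \<Longrightarrow> x \<le> e * c"
  shows "x \<le> 0"
proof -
  have "((\<lambda>e. e * c) \<longlongrightarrow> 0 * c) (at_right 0)" by (intro tendsto_intros)
  moreover have "\<forall>\<^sub>F e in at_right 0. x \<le> e * c"
    using eventually_at_right_less[of "0::real"] by eventually_elim (rule assms)
  ultimately show "x \<le> 0" by (simp add: tendsto_lowerbound)
qed

lemma has_delta_derivative_jump:
  assumes "has_delta_derivative T f D t"
  shows "f (sigma T t) = f t + D * of_real (sigma T t - t)"
proof -
  have "t \<in> T" using assms Tkappa_subset by (auto simp: has_delta_derivative_def)
  have "cmod (f (sigma T t) - f t - D * of_real (sigma T t - t)) \<le> 0"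
  proof (rule le_0_if_le_all_pos_mult)
    fix e :: real assume "e > 0"
    then show "cmod (f (sigma T t) - f t - D * of_real (sigma T t - t)) \<le> e * \<bar>sigma T t - t\<bar>"
      using assms \<open>t \<in> T\<close> unfolding has_delta_derivative_def by fastforce
  qed
  then show ?thesis by (simp add: algebra_simps)
qed

lemma has_delta_derivative_continuous:
  assumes "has_delta_derivative T f D t"
  shows "continuous (at t within T) f"
proof -
  define r where "r s = f (sigma T t) - f s - D * of_real (sigma T t - s)" for s
  have "(r \<longlongrightarrow> 0) (at t within T)"
  proof (rule Lim_within[THEN iffD2], intro allI impI)
    fix e :: real assume "e > 0"
    define \<mu> where "\<mu> = \<bar>sigma T t - t\<bar>"
    have "\<mu> \<ge> 0" by (simp add: \<mu>_def)
    then have "e / (2 * (\<mu> + 1)) > 0" using \<open>e > 0\<close> by simp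
    then obtain d where "d > 0" and d: "\<forall>s\<in>T. \<bar>s - t\<bar> < d \<longrightarrow> cmod (r s) \<le> e / (2 * (\<mu> + 1)) * \<bar>sigma T t - s\<bar>"
      using assms unfolding has_delta_derivative_def r_def by blast
    have "cmod (r s) < e" if "s \<in> T" "\<bar>s - t\<bar> < min d 1" for s
    proof -
      have "\<bar>sigma T t - s\<bar> \<le> \<mu> + 1" using that unfolding \<mu>_def by linarith
      then have "e / (2 * (\<mu> + 1)) * \<bar>sigma T t - s\<bar> \<le> e / (2 * (\<mu> + 1)) * (\<mu> + 1)"
        using \<open>e / (2 * (\<mu> + 1)) > 0\<close> by (intro mult_left_mono) auto
      also have "\<dots> = e / 2" using \<open>\<mu> \<ge> 0\<close> by (simp add: field_simps)
      finally have "e / (2 * (\<mu> + 1)) * \<bar>sigma T t - s\<bar> \<le> e / 2" .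
      moreover have "cmod (r s) \<le> e / (2 * (\<mu> + 1)) * \<bar>sigma T t - s\<bar>" using d that by simp
      ultimately show ?thesis using \<open>e > 0\<close> by linarith
    qed
    then show "\<exists>d>0. \<forall>s\<in>T. 0 < dist s t \<and> dist s t < d \<longrightarrow> dist (r s) 0 < e"
      using \<open>d > 0\<close> by (intro exI[of _ "min d 1"]) (auto simp: dist_real_def)
  qed
  then have "((\<lambda>s. f (sigma T t) - D * of_real (sigma T t - s) - r s) \<longlongrightarrow>
      f (sigma T t) - D * of_real (sigma T t - t) - 0) (at t within T)"
    by (intro tendsto_intros)
  then show ?thesis
    unfolding continuous_within using has_delta_derivative_jump[OF assms] by (simp add: r_def)
qed

lemma has_delta_derivative_dense_tendsto:
  assumes "has_delta_derivative T f D t" "sigma T t = t"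
  shows "((\<lambda>s. (f s - f t) / of_real (s - t)) \<longlongrightarrow> D) (at t within T)"
proof (rule Lim_within[THEN iffD2], intro allI impI)
  fix e :: real assume "e > 0"
  then obtain d where "d > 0" and d: "\<forall>s\<in>T. \<bar>s - t\<bar> < d \<longrightarrow>
      cmod (f t - f s - D * of_real (t - s)) \<le> e / 2 * \<bar>t - s\<bar>"
    using assms unfolding has_delta_derivative_def by (metis half_gt_zero)
  have "cmod ((f s - f t) / of_real (s - t) - D) < e" if "s \<in> T" "s \<noteq> t" "\<bar>s - t\<bar> < d" for s
  proof -
    have "(f s - f t) / of_real (s - t) - D = (f t - f s - D * of_real (t - s)) / of_real (t - s)"
      using that(2) by (simp add: field_simps)
    then have "cmod ((f s - f t) / of_real (s - t) - D) = cmod (f t - f s - D * of_real (t - s)) / \<bar>t - s\<bar>"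
      by (simp only: norm_divide norm_of_real)
    also have "\<dots> \<le> e / 2" using d that by (simp add: divide_le_eq)
    finally show ?thesis using \<open>e > 0\<close> by simp
  qed
  then show "\<exists>d>0. \<forall>s\<in>T. 0 < dist s t \<and> dist s t < d \<longrightarrow> dist ((f s - f t) / of_real (s - t)) D < e"
    using \<open>d > 0\<close> by (auto simp: dist_real_def dist_norm)
qed

lemma has_delta_derivative_dense_increment:
  assumes "has_delta_derivative T f D t" "sigma T t = t" "e > 0"
  obtains d where "d > 0"
    "\<And>u. u \<in> T \<Longrightarrow> \<bar>u - t\<bar> < d \<Longrightarrow> cmod (f u - f t) \<le> (cmod D + e) * \<bar>u - t\<bar>"
proof -
  obtain d where "d > 0" and d: "\<forall>u\<in>T. \<bar>u - t\<bar> < d \<longrightarrow>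
      cmod (f t - f u - D * of_real (t - u)) \<le> e * \<bar>t - u\<bar>"
    using assms unfolding has_delta_derivative_def by force
  have "cmod (f u - f t) \<le> (cmod D + e) * \<bar>u - t\<bar>" if "u \<in> T" "\<bar>u - t\<bar> < d" for u
  proof -
    have "f u - f t = D * of_real (u - t) - (f t - f u - D * of_real (t - u))"
      by (simp add: algebra_simps)
    then have "cmod (f u - f t) \<le> cmod (D * of_real (u - t)) + cmod (f t - f u - D * of_real (t - u))"
      by (metis norm_triangle_ineq4)
    also have "\<dots> \<le> cmod D * \<bar>u - t\<bar> + e * \<bar>u - t\<bar>"
      using d that by (intro add_mono) (auto simp: norm_mult abs_minus_commute simp del: of_real_diff)
    finally show ?thesis by (simp add: algebra_simps)
  qed
  then show ?thesis using that \<open>d > 0\<close> by blast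
qed

lemma Tkappa_dense_islimpt:
  assumes "t \<in> Tkappa T" "sigma T t = t" "u \<in> T" "u \<noteq> t"
  shows "t islimpt T"
proof (cases "\<exists>v\<in>T. t < v")
  case True
  then obtain v where "v \<in> T" "t < v" by blast
  then show ?thesis
    using right_dense_islimpt[OF assms(2)] by (auto intro: islimpt_subset)
next
  case False
  have "t \<in> T" using assms(1) Tkappa_subset by blast
  with False have "Sup T = t" by (intro cSup_eq_maximum) auto
  with assms(1) have "rho T t = t" using rho_le[of T t] by (force simp: Tkappa_def)
  moreover have "u < t" using False assms(3,4) by force
  ultimately show ?thesis
    using left_dense_islimpt[OF _ assms(3)] by (auto intro: islimpt_subset)
qed

lemma has_delta_derivative_unique:
  assumes "has_delta_derivative T f D1 t" "has_delta_derivative T f D2 t" "u \<in> T" "u \<noteq> t"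
  shows "D1 = D2"
proof (cases "sigma T t = t")
  case True
  have "t \<in> Tkappa T" using assms(1) by (simp add: has_delta_derivative_def)
  then have "at t within T \<noteq> bot"
    using Tkappa_dense_islimpt[OF _ True assms(3,4)] by (simp add: trivial_limit_within)
  then show ?thesis
    using tendsto_unique has_delta_derivative_dense_tendsto[OF _ True] assms(1,2) by blast
next
  case False
  then have "of_real (sigma T t - t) \<noteq> (0 :: complex)" by simp
  then show ?thesis
    using has_delta_derivative_jump[OF assms(1)] has_delta_derivative_jump[OF assms(2)] by simp
qed

lemma delta_deriv_eqI:
  assumes "has_delta_derivative T f D t" "u \<in> T" "u \<noteq> t"
  shows "delta_deriv T f t = D"
  unfolding delta_deriv_def using assms has_delta_derivative_unique by blast

lemma has_delta_derivative_lincomb: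
  assumes f: "has_delta_derivative T f D t" and g: "has_delta_derivative T g E t"
  shows "has_delta_derivative T (\<lambda>x. c * f x + d * g x) (c * D + d * E) t"
  unfolding has_delta_derivative_def
proof (intro conjI allI impI)
  show "t \<in> Tkappa T" using f by (simp add: has_delta_derivative_def)
  fix e :: real assume "e > 0"
  define e' where "e' = e / (2 * (cmod c + cmod d + 1))"
  have "cmod c + cmod d + 1 > 0" using norm_ge_zero[of c] norm_ge_zero[of d] by linarith
  then have "e' > 0" using \<open>e > 0\<close> by (simp add: e'_def)
  have "(cmod c + cmod d) * e' \<le> (cmod c + cmod d + 1) * e'"
    using \<open>e' > 0\<close> by (intro mult_right_mono) auto
  also have "\<dots> = e / 2" using \<open>cmod c + cmod d + 1 > 0\<close> by (simp add: e'_def field_simps)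
  finally have e': "(cmod c + cmod d) * e' \<le> e" using \<open>e > 0\<close> by simp
  let ?rf = "\<lambda>s. f (sigma T t) - f s - D * of_real (sigma T t - s)"
  let ?rg = "\<lambda>s. g (sigma T t) - g s - E * of_real (sigma T t - s)"
  obtain \<delta>f where "\<delta>f > 0" and \<delta>f: "\<forall>s\<in>T. \<bar>s - t\<bar> < \<delta>f \<longrightarrow> cmod (?rf s) \<le> e' * \<bar>sigma T t - s\<bar>"
    using f \<open>e' > 0\<close> unfolding has_delta_derivative_def by blast
  obtain \<delta>g where "\<delta>g > 0" and \<delta>g: "\<forall>s\<in>T. \<bar>s - t\<bar> < \<delta>g \<longrightarrow> cmod (?rg s) \<le> e' * \<bar>sigma T t - s\<bar>"
    using g \<open>e' > 0\<close> unfolding has_delta_derivative_def by blast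
  have "cmod (c * f (sigma T t) + d * g (sigma T t) - (c * f s + d * g s)
      - (c * D + d * E) * of_real (sigma T t - s)) \<le> e * \<bar>sigma T t - s\<bar>"
    if "s \<in> T" "\<bar>s - t\<bar> < min \<delta>f \<delta>g" for s
  proof -
    have "cmod (c * f (sigma T t) + d * g (sigma T t) - (c * f s + d * g s)
        - (c * D + d * E) * of_real (sigma T t - s)) = cmod (c * ?rf s + d * ?rg s)"
      by (simp add: algebra_simps)
    also have "\<dots> \<le> cmod c * cmod (?rf s) + cmod d * cmod (?rg s)"
      by (metis norm_mult norm_triangle_ineq)
    also have "\<dots> \<le> cmod c * (e' * \<bar>sigma T t - s\<bar>) + cmod d * (e' * \<bar>sigma T t - s\<bar>)"
      using \<delta>f \<delta>g that by (intro add_mono mult_left_mono) auto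
    also have "\<dots> = ((cmod c + cmod d) * e') * \<bar>sigma T t - s\<bar>" by (simp add: algebra_simps)
    also have "\<dots> \<le> e * \<bar>sigma T t - s\<bar>" using e' by (intro mult_right_mono) auto
    finally show ?thesis .
  qed
  then show "\<exists>\<delta>>0. \<forall>s\<in>T. \<bar>s - t\<bar> < \<delta> \<longrightarrow> cmod (c * f (sigma T t) + d * g (sigma T t) - (c * f s + d * g s)
      - (c * D + d * E) * of_real (sigma T t - s)) \<le> e * \<bar>sigma T t - s\<bar>"
    using \<open>\<delta>f > 0\<close> \<open>\<delta>g > 0\<close> by (intro exI[of _ "min \<delta>f \<delta>g"]) auto
qed

lemma has_delta_derivative_cong:
  assumes "closed T" "\<And>x. x \<in> T \<Longrightarrow> f x = g x"
  shows "has_delta_derivative T f D t \<longleftrightarrow> has_delta_derivative T g D t"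
proof -
  have "sigma T t \<in> T" if "t \<in> Tkappa T"
    using that Tkappa_subset sigma_in[OF assms(1)] by blast
  then show ?thesis using assms(2) unfolding has_delta_derivative_def by auto
qed

lemma delta_deriv_cong:
  assumes "closed T" "\<And>x. x \<in> T \<Longrightarrow> f x = g x"
  shows "delta_deriv T f t = delta_deriv T g t"
  unfolding delta_deriv_def using has_delta_derivative_cong[OF assms] by simp

lemma continuous_within_islimpt_closed:
  assumes "continuous (at t within T) f" "t islimpt Y" "Y \<subseteq> T" "closed C"
    and "\<And>s. s \<in> Y \<Longrightarrow> f s \<in> C"
  shows "f t \<in> C"
proof (rule Lim_in_closed_set[OF \<open>closed C\<close>])
  show "((f \<longlongrightarrow> f t) (at t within Y))"
    using assms(1,3) continuous_within continuous_within_subset by blast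
  show "\<forall>\<^sub>F s in at t within Y. f s \<in> C" using assms(5) by (simp add: eventually_at_filter)
  show "at t within Y \<noteq> bot" using assms(2) by (simp add: trivial_limit_within)
qed

lemma delta_mean_value_inequality_approx:
  fixes f :: "real \<Rightarrow> complex"
  assumes "closed T" "r \<in> T" "e > 0" "K \<ge> 0"
    and deriv: "\<And>v. v \<in> T \<Longrightarrow> r \<le> v \<Longrightarrow> v \<le> s \<Longrightarrow> has_delta_derivative T f (f' v) v"
    and bound: "\<And>v. v \<in> T \<Longrightarrow> r \<le> v \<Longrightarrow> v < s \<Longrightarrow> cmod (f' v) \<le> K"
    and "t \<in> T" "r \<le> t"
  shows "t \<le> s \<longrightarrow> cmod (f t - f r) \<le> (K + e) * (t - r)"
  using \<open>closed T\<close> \<open>r \<in> T\<close> \<open>t \<in> T\<close> \<open>r \<le> t\<close>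
proof (induction t rule: time_scale_induct)
  case (right_scattered t)
  show ?case
  proof
    assume "sigma T t \<le> s"
    with right_scattered have "t < s" by linarith
    then have "f (sigma T t) = f t + f' t * of_real (sigma T t - t)"
      by (intro has_delta_derivative_jump deriv) (use right_scattered in auto)
    then have "f (sigma T t) - f t = f' t * of_real (sigma T t - t)" by simp
    then have "cmod (f (sigma T t) - f t) \<le> K * (sigma T t - t)"
      using bound right_scattered \<open>t < s\<close> by (simp add: norm_mult mult_right_mono del: of_real_diff)
    moreover have "cmod (f t - f r) \<le> (K + e) * (t - r)" using right_scattered \<open>t < s\<close> by simp
    ultimately have "cmod (f (sigma T t) - f r) \<le> K * (sigma T t - t) + (K + e) * (t - r)"
      by (rule norm_diff_triangle_le)
    also have "\<dots> \<le> (K + e) * (sigma T t - r)" using right_scattered \<open>e > 0\<close> by (simp add: algebra_simps)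
    finally show "cmod (f (sigma T t) - f r) \<le> (K + e) * (sigma T t - r)" .
  qed
next
  case (right_dense t)
  show ?case
  proof (cases "t < s")
    case True
    then obtain d where "d > 0"
      and d: "\<And>u. u \<in> T \<Longrightarrow> \<bar>u - t\<bar> < d \<Longrightarrow> cmod (f u - f t) \<le> (cmod (f' t) + e) * \<bar>u - t\<bar>"
      using has_delta_derivative_dense_increment[OF deriv \<open>sigma T t = t\<close> \<open>e > 0\<close>] right_dense by auto
    have "cmod (f u - f r) \<le> (K + e) * (u - r)" if "u \<in> T" "t < u" "u < t + d" for u
    proof -
      have "cmod (f u - f t) \<le> (cmod (f' t) + e) * (u - t)" using d[OF that(1)] that by simp
      also have "\<dots> \<le> (K + e) * (u - t)"
        using bound[of t] right_dense True that by (simp add: mult_right_mono)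
      finally have "cmod (f u - f t) \<le> (K + e) * (u - t)" .
      then have "cmod (f u - f r) \<le> (K + e) * (u - t) + (K + e) * (t - r)"
        using right_dense True by (intro norm_diff_triangle_le) auto
      then show ?thesis by (simp add: algebra_simps)
    qed
    then show ?thesis using \<open>d > 0\<close> by blast
  qed (auto intro!: exI[of _ 1])
next
  case (left_dense t)
  show ?case
  proof
    assume "t \<le> s"
    have "f t \<in> cball (f r) ((K + e) * (t - r))"
    proof (rule continuous_within_islimpt_closed[where T = T and Y = "{x\<in>T. r \<le> x \<and> x < t}"])
      show "continuous (at t within T) f"
        by (rule has_delta_derivative_continuous[OF deriv]) (use left_dense \<open>t \<le> s\<close> in auto)
      show "t islimpt {x\<in>T. r \<le> x \<and> x < t}"
        using left_dense_islimpt left_dense \<open>r \<in> T\<close> by blast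
      show "f x \<in> cball (f r) ((K + e) * (t - r))" if "x \<in> {x\<in>T. r \<le> x \<and> x < t}" for x
      proof -
        have "cmod (f x - f r) \<le> (K + e) * (x - r)" using left_dense that \<open>t \<le> s\<close> by auto
        also have "\<dots> \<le> (K + e) * (t - r)" using that assms(3,4) by (intro mult_left_mono) auto
        finally show ?thesis by (simp add: dist_norm norm_minus_commute)
      qed
    qed auto
    then show "cmod (f t - f r) \<le> (K + e) * (t - r)" by (simp add: dist_norm norm_minus_commute)
  qed
qed simp

lemma delta_mean_value_inequality:
  fixes f :: "real \<Rightarrow> complex"
  assumes "closed T" "r \<in> T" "s \<in> T" "r \<le> s"
    and deriv: "\<And>v. v \<in> T \<Longrightarrow> r \<le> v \<Longrightarrow> v \<le> s \<Longrightarrow> has_delta_derivative T f (f' v) v"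
    and bound: "\<And>v. v \<in> T \<Longrightarrow> r \<le> v \<Longrightarrow> v < s \<Longrightarrow> cmod (f' v) \<le> K"
  shows "cmod (f s - f r) \<le> K * (s - r)"
proof (cases "r = s")
  case False
  then have "K \<ge> 0" using bound[OF \<open>r \<in> T\<close>] \<open>r \<le> s\<close> norm_ge_zero[of "f' r"] by linarith
  then have "cmod (f s - f r) - K * (s - r) \<le> e * (s - r)" if "e > 0" for e
    using delta_mean_value_inequality_approx[OF assms(1,2) that _ deriv bound assms(3,4)]
    by (simp add: algebra_simps)
  then have "cmod (f s - f r) - K * (s - r) \<le> 0" by (rule le_0_if_le_all_pos_mult)
  then show ?thesis by simp
qed simp

section \<open>Bounded time scales\<close>

locale bounded_time_scale =
  fixes T :: "real set"
  assumes closed_T: "closed T" and bounded_T: "bounded T" and T_nonempty: "T \<noteq> {}"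
begin

abbreviation \<beta> :: real where "\<beta> \<equiv> rho T (Sup T)"

lemma Sup_in_T: "Sup T \<in> T"
  by (rule closed_contains_Sup[OF T_nonempty bounded_imp_bdd_above[OF bounded_T] closed_T])

lemma le_Sup_T: "t \<in> T \<Longrightarrow> t \<le> Sup T"
  by (rule cSup_upper[OF _ bounded_imp_bdd_above[OF bounded_T]])

lemma Inf_in_T: "Inf T \<in> T"
  by (rule closed_contains_Inf[OF T_nonempty bounded_imp_bdd_below[OF bounded_T] closed_T])

lemma \<beta>_in_T: "\<beta> \<in> T"
  using rho_in[OF closed_T Sup_in_T] .

lemma le_\<beta>: "t \<in> T \<Longrightarrow> t < Sup T \<Longrightarrow> t \<le> \<beta>"
  by (rule rho_ge)

lemma Tkappa_eq: "Tkappa T = {t\<in>T. t \<le> \<beta>}"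
  unfolding Tkappa_def using le_Sup_T by force

lemma closed_Tkappa: "closed (Tkappa T)"
proof -
  have "Tkappa T = T \<inter> {..\<beta>}" by (auto simp: Tkappa_eq)
  then show ?thesis using closed_T by (simp add: closed_Int)
qed

lemma \<beta>_in_Tkappa: "\<beta> \<in> Tkappa T"
  using \<beta>_in_T by (simp add: Tkappa_eq)

lemma Sup_Tkappa: "Sup (Tkappa T) = \<beta>"
  using \<beta>_in_Tkappa by (intro cSup_eq_maximum) (auto simp: Tkappa_eq)

lemma sigma_Tkappa:
  assumes "t \<in> T" "t < sigma T t" "sigma T t \<le> \<beta>"
  shows "sigma (Tkappa T) t = sigma T t"
  using assms sigma_in[OF closed_T] sigma_le[of _ T t] by (intro sigma_eqI) (auto simp: Tkappa_eq)

lemma rho_Tkappa: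
  assumes "t \<in> Tkappa T"
  shows "rho (Tkappa T) t = rho T t"
proof -
  have "{s \<in> Tkappa T. s < t} = {s\<in>T. s < t}" using assms by (auto simp: Tkappa_eq)
  then show ?thesis unfolding rho_def by (metis (mono_tags, lifting) mem_Collect_eq)
qed

lemma less_\<beta>_in_Tkappa2:
  assumes "t \<in> T" "t < \<beta>"
  shows "t \<in> Tkappa (Tkappa T)"
proof -
  have "t \<in> Tkappa T" using assms by (simp add: Tkappa_eq)
  then show ?thesis using less_Sup_in_Tkappa assms(2) by (simp add: Sup_Tkappa)
qed

lemma left_dense_in_Tkappa2: "t \<in> Tkappa T \<Longrightarrow> rho T t = t \<Longrightarrow> t \<in> Tkappa (Tkappa T)"
  using left_dense_in_Tkappa[of t "Tkappa T"] by (simp add: rho_Tkappa)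

lemma right_dense_less_\<beta>:
  assumes "t \<in> T" "sigma T t = t" "t < Sup T"
  shows "t < \<beta>"
proof (rule ccontr)
  assume "\<not> t < \<beta>"
  then have "t = \<beta>" using le_\<beta> assms by force
  obtain v where "v \<in> T" "t < v" "v < Sup T"
    using right_dense_approach[OF assms(2) Sup_in_T assms(3), of "Sup T - t"] assms(3) by auto
  then show False using le_\<beta> \<open>t = \<beta>\<close> by force
qed

lemma Inf_in_Tkappa: "Inf T \<in> Tkappa T"
proof -
  have "Inf T \<le> \<beta>" using \<beta>_in_T by (rule cInf_lower[OF _ bounded_imp_bdd_below[OF bounded_T]])
  then show ?thesis using Inf_in_T by (simp add: Tkappa_eq)
qed

lemma bform_cong:
  assumes "\<And>t. t \<in> T \<Longrightarrow> y1 t = y2 t"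
  shows "bform T c11 c12 c21 c22 y1 = bform T c11 c12 c21 c22 y2"
  using assms Inf_in_T \<beta>_in_T delta_deriv_cong[OF closed_T assms] by (simp add: bform_def)

end

section \<open>Uniqueness for the initial value problem\<close>

lemma exists_short_step:
  fixes d c :: real
  assumes "d > 0" "c \<ge> 0"
  obtains h where "h > 0" "h < d" "h * h * c < 1"
proof -
  define h where "h = min (d / 2) (1 / (c + 1))"
  have "h > 0" "h < d" using assms by (auto simp: h_def)
  have "h \<le> 1 / (c + 1)" by (simp add: h_def)
  then have "h * (c + 1) \<le> 1" using assms by (simp add: field_simps)
  moreover have "h \<le> h * (c + 1)" using \<open>h > 0\<close> assms by (simp add: algebra_simps)
  ultimately have "h \<le> 1" by linarith
  have "h * h * c \<le> h * c"
    using \<open>h \<le> 1\<close> \<open>h > 0\<close> \<open>c \<ge> 0\<close> by (intro mult_right_mono) (simp_all add: mult_le_cancel_left1)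
  also have "\<dots> < h * (c + 1)" using \<open>h > 0\<close> by (simp add: algebra_simps)
  finally have "h * h * c < 1" using \<open>h * (c + 1) \<le> 1\<close> by linarith
  then show ?thesis using that \<open>h > 0\<close> \<open>h < d\<close> by blast
qed

lemma increment_bound_symmetric:
  fixes f :: "real \<Rightarrow> 'a::real_normed_vector"
  assumes "\<And>r s. r \<in> S \<Longrightarrow> s \<in> S \<Longrightarrow> r \<le> s \<Longrightarrow> norm (f s - f r) \<le> M * (s - r)"
    and "r \<in> S" "s \<in> S"
  shows "norm (f s - f r) \<le> M * \<bar>s - r\<bar>"
  using assms(1)[of r s] assms(1)[of s r] assms(2,3) by (cases "r \<le> s") (auto simp: norm_minus_commute)

locale homogeneous_system = bounded_time_scale +
  fixes z w :: "real \<Rightarrow> complex" and lam :: complex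
  assumes z_deriv: "t \<in> Tkappa T \<Longrightarrow> has_delta_derivative T z (w t) t"
    and w_deriv: "t \<in> Tkappa (Tkappa T) \<Longrightarrow> has_delta_derivative (Tkappa T) w (- lam * z (sigma T t)) t"
begin

lemma z_bound_on_interval:
  assumes kappa: "{u\<in>T. c \<le> u \<and> u \<le> d} \<subseteq> Tkappa T"
    and bound: "\<And>v. v \<in> T \<Longrightarrow> c \<le> v \<Longrightarrow> v \<le> d \<Longrightarrow> cmod (w v) \<le> M"
    and p: "p \<in> T" "c \<le> p" "p \<le> d" "z p = 0"
    and s: "s \<in> T" "c \<le> s" "s \<le> d"
  shows "cmod (z s) \<le> M * (d - c)"
proof -
  let ?I = "{u\<in>T. c \<le> u \<and> u \<le> d}"
  have "cmod (z v - z u) \<le> M * (v - u)" if "u \<in> ?I" "v \<in> ?I" "u \<le> v" for u v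
  proof (rule delta_mean_value_inequality[OF closed_T])
    show "has_delta_derivative T z (w x) x" if "x \<in> T" "u \<le> x" "x \<le> v" for x
      using z_deriv kappa that \<open>u \<in> ?I\<close> \<open>v \<in> ?I\<close> by force
  qed (use that bound in auto)
  then have "cmod (z s - z p) \<le> M * \<bar>s - p\<bar>"
    by (rule increment_bound_symmetric[where S = ?I]) (use p s in auto)
  also have "\<dots> \<le> M * (d - c)"
  proof (rule mult_left_mono)
    show "M \<ge> 0" using bound[OF p(1-3)] norm_ge_zero[of "w p"] by linarith
  qed (use p s in auto)
  finally show ?thesis using p by simp
qed

lemma w_bound_on_interval:
  assumes kappa: "{u\<in>T. c \<le> u \<and> u \<le> d} \<subseteq> Tkappa (Tkappa T)"
    and bound: "\<And>v. v \<in> T \<Longrightarrow> c \<le> v \<Longrightarrow> v \<le> d \<Longrightarrow> cmod (z v) \<le> M"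
    and p: "p \<in> T" "c \<le> p" "p \<le> d" "w p = 0"
    and s: "s \<in> T" "c \<le> s" "s \<le> d"
  shows "cmod (w s) \<le> cmod lam * M * (d - c)"
proof -
  let ?I = "{u\<in>T. c \<le> u \<and> u \<le> d}"
  have "cmod (w v - w u) \<le> cmod lam * M * (v - u)" if "u \<in> ?I" "v \<in> ?I" "u \<le> v" for u v
  proof (rule delta_mean_value_inequality[OF closed_Tkappa])
    show "u \<in> Tkappa T" "v \<in> Tkappa T" using kappa that Tkappa_subset by blast+
    show "has_delta_derivative (Tkappa T) w (- lam * z (sigma T x)) x"
      if "x \<in> Tkappa T" "u \<le> x" "x \<le> v" for x
      using w_deriv kappa that \<open>u \<in> ?I\<close> \<open>v \<in> ?I\<close> Tkappa_subset by force
    show "cmod (- lam * z (sigma T x)) \<le> cmod lam * M" if "x \<in> Tkappa T" "u \<le> x" "x < v" for x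
    proof -
      have "x \<in> T" using that Tkappa_subset by blast
      then have "cmod (z (sigma T x)) \<le> M"
        using bound sigma_in[OF closed_T] sigma_ge[of x T] sigma_le[of v T x] that \<open>u \<in> ?I\<close> \<open>v \<in> ?I\<close>
        by force
      then show ?thesis by (simp add: norm_mult mult_left_mono)
    qed
  qed (use that in auto)
  then have "cmod (w s - w p) \<le> cmod lam * M * \<bar>s - p\<bar>"
    by (rule increment_bound_symmetric[where S = ?I]) (use p s in auto)
  also have "\<dots> \<le> cmod lam * M * (d - c)"
  proof (rule mult_left_mono)
    have "M \<ge> 0" using bound[OF p(1-3)] norm_ge_zero[of "z p"] by linarith
    then show "cmod lam * M \<ge> 0" by simp
  qed (use p s in auto)
  finally show ?thesis using p by simp
qed

lemma vanishes_on_short_interval: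
  assumes "c < d" "(d - c) * (d - c) * cmod lam < 1"
    and kappa: "{u\<in>T. c \<le> u \<and> u \<le> d} \<subseteq> Tkappa (Tkappa T)"
    and p: "p \<in> T" "c \<le> p" "p \<le> d" "z p = 0" "w p = 0"
    and u: "u \<in> T" "c \<le> u" "u \<le> d"
  shows "z u = 0 \<and> w u = 0"
proof -
  define I where "I = {u\<in>T. c \<le> u \<and> u \<le> d}"
  have "I \<subseteq> Tkappa T" using kappa Tkappa_subset by (auto simp: I_def)
  have "I = {c..d} \<inter> T" by (auto simp: I_def)
  then have "compact I" using closed_T by (simp add: compact_Int_closed)
  have "continuous (at v within I) z" "continuous (at v within I) w" if "v \<in> I" for v
    using that \<open>I \<subseteq> Tkappa T\<close> Tkappa_subset kappa
    by (auto simp: I_def intro!: continuous_within_subset[OF has_delta_derivative_continuous]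
        z_deriv w_deriv)
  then have "continuous_on I (\<lambda>v. cmod (z v))" "continuous_on I (\<lambda>v. cmod (w v))"
    by (auto simp: continuous_on_eq_continuous_within intro: continuous_intros)
  moreover have "I \<noteq> {}" using p by (auto simp: I_def)
  ultimately obtain uz uw where "uz \<in> I" "uw \<in> I"
    and z_le: "\<And>v. v \<in> I \<Longrightarrow> cmod (z v) \<le> cmod (z uz)"
    and w_le: "\<And>v. v \<in> I \<Longrightarrow> cmod (w v) \<le> cmod (w uw)"
    using continuous_attains_sup[OF \<open>compact I\<close>] by metis
  define h where "h = d - c"
  have "cmod (z uz) \<le> cmod (w uw) * h"
    unfolding h_def using z_bound_on_interval \<open>I \<subseteq> Tkappa T\<close> w_le p \<open>uz \<in> I\<close> by (auto simp: I_def)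
  moreover have "cmod (w uw) \<le> cmod lam * cmod (z uz) * h"
    unfolding h_def using w_bound_on_interval kappa z_le p \<open>uw \<in> I\<close> by (auto simp: I_def)
  moreover have "h \<ge> 0" using \<open>c < d\<close> by (simp add: h_def)
  ultimately have "cmod (z uz) \<le> cmod lam * cmod (z uz) * h * h"
    by (meson mult_right_mono order_trans)
  then have "cmod (z uz) * (1 - h * h * cmod lam) \<le> 0" by (simp add: algebra_simps)
  moreover have "1 - h * h * cmod lam > 0" using assms(2) by (simp add: h_def)
  ultimately have "z uz = 0" by (simp add: mult_le_0_iff)
  then have "w uw = 0" using \<open>cmod (w uw) \<le> cmod lam * cmod (z uz) * h\<close> by simp
  have "u \<in> I" using u by (simp add: I_def)
  then show ?thesis using z_le w_le \<open>z uz = 0\<close> \<open>w uw = 0\<close> by (metis norm_le_zero_iff norm_zero)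
qed

lemma vanishes_at_limit:
  assumes "t \<in> Tkappa (Tkappa T)" "t islimpt Y" "Y \<subseteq> Tkappa T"
    and "\<And>s. s \<in> Y \<Longrightarrow> z s = 0 \<and> w s = 0"
  shows "z t = 0 \<and> w t = 0"
proof
  have "t \<in> Tkappa T" using assms(1) Tkappa_subset by blast
  show "z t = 0"
    using continuous_within_islimpt_closed[where C = "{0}", OF has_delta_derivative_continuous[OF z_deriv]]
      \<open>t \<in> Tkappa T\<close> assms(2-4) Tkappa_subset by blast
  show "w t = 0"
    using continuous_within_islimpt_closed[where C = "{0}", OF has_delta_derivative_continuous[OF w_deriv]]
      assms by blast
qed

lemma vanishes_at_sigma:
  assumes "t \<in> Tkappa T" "t < sigma T t" "z t = 0" "w t = 0"
  shows "z (sigma T t) = 0" "sigma T t \<in> Tkappa T \<Longrightarrow> w (sigma T t) = 0"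
proof -
  show "z (sigma T t) = 0" using has_delta_derivative_jump[OF z_deriv[OF assms(1)]] assms(3,4) by simp
  moreover assume "sigma T t \<in> Tkappa T"
  then have "t \<in> Tkappa (Tkappa T)" "sigma (Tkappa T) t = sigma T t"
    using assms(1,2) less_\<beta>_in_Tkappa2 sigma_Tkappa Tkappa_subset by (auto simp: Tkappa_eq)
  ultimately show "w (sigma T t) = 0" using has_delta_derivative_jump[OF w_deriv] assms(4) by force
qed

lemma vanishes_at_rho:
  assumes "t \<in> Tkappa T" "rho T t < t" "z t = 0" "w t = 0"
  shows "z (rho T t) = 0 \<and> w (rho T t) = 0"
proof -
  define r where "r = rho T t"
  have "t \<in> T" using assms(1) Tkappa_subset by blast
  then have "r \<in> T" "r < t" "sigma T r = t"
    using rho_in[OF closed_T] sigma_rho[OF closed_T] assms(2) by (auto simp: r_def)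
  then have "r \<in> Tkappa T" "r \<in> Tkappa (Tkappa T)" "sigma (Tkappa T) r = t"
    using assms(1) less_\<beta>_in_Tkappa2 sigma_Tkappa by (auto simp: Tkappa_eq)
  then have "w r = 0"
    using has_delta_derivative_jump[OF w_deriv] \<open>sigma T r = t\<close> \<open>r < t\<close> assms(3,4) by force
  moreover have "z r = 0"
    using has_delta_derivative_jump[OF z_deriv[OF \<open>r \<in> Tkappa T\<close>]] \<open>sigma T r = t\<close> assms(3) \<open>w r = 0\<close>
    by simp
  ultimately show ?thesis by (simp add: r_def)
qed

lemma vanishes_right_neighbourhood:
  assumes "t \<in> T" "t < \<beta>" "z t = 0" "w t = 0"
  shows "\<exists>h>0. \<forall>s\<in>T. t < s \<and> s < t + h \<longrightarrow> z s = 0 \<and> w s = 0"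
proof -
  obtain h where "h > 0" "h < \<beta> - t" "h * h * cmod lam < 1"
    using exists_short_step[of "\<beta> - t" "cmod lam"] assms(2) by auto
  have "z s = 0 \<and> w s = 0" if "s \<in> T" "t < s" "s < t + h" for s
  proof (rule vanishes_on_short_interval[of t "t + h" t])
    show "{u \<in> T. t \<le> u \<and> u \<le> t + h} \<subseteq> Tkappa (Tkappa T)"
      using less_\<beta>_in_Tkappa2 \<open>h < \<beta> - t\<close> by auto
  qed (use that assms \<open>h > 0\<close> \<open>h * h * cmod lam < 1\<close> in auto)
  then show ?thesis using \<open>h > 0\<close> by blast
qed

lemma vanishes_left_neighbourhood:
  assumes "t \<in> Tkappa T" "rho T t = t" "z t = 0" "w t = 0"
  shows "\<exists>h>0. \<forall>s\<in>T. t - h < s \<and> s < t \<longrightarrow> z s = 0 \<and> w s = 0"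
proof -
  obtain h where "h > 0" "h < 1" "h * h * cmod lam < 1"
    using exists_short_step[of 1 "cmod lam"] by auto
  have "{u \<in> T. t - h \<le> u \<and> u \<le> t} \<subseteq> Tkappa (Tkappa T)"
  proof
    fix u assume u: "u \<in> {u \<in> T. t - h \<le> u \<and> u \<le> t}"
    show "u \<in> Tkappa (Tkappa T)"
    proof (cases "u = t")
      case True
      then show ?thesis using left_dense_in_Tkappa2 assms(1,2) by blast
    next
      case False
      then have "u < \<beta>" using u assms(1) by (auto simp: Tkappa_eq)
      then show ?thesis using less_\<beta>_in_Tkappa2 u by blast
    qed
  qed
  moreover have "t \<in> T" using assms(1) Tkappa_subset by blast
  ultimately have "z s = 0 \<and> w s = 0" if "s \<in> T" "t - h < s" "s < t" for s
    using vanishes_on_short_interval[of "t - h" t t] that assms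
      \<open>h > 0\<close> \<open>h * h * cmod lam < 1\<close> by auto
  then show ?thesis using \<open>h > 0\<close> by blast
qed

lemma vanishes_forward:
  assumes "a \<in> Tkappa T" "z a = 0" "w a = 0" "t \<in> T" "a \<le> t"
  shows "z t = 0 \<and> (t \<in> Tkappa T \<longrightarrow> w t = 0)"
proof -
  have "a \<in> T" using assms(1) Tkappa_subset by blast
  show ?thesis
    using closed_T \<open>a \<in> T\<close> assms(4,5)
  proof (induction t rule: time_scale_induct)
    case start
    then show ?case using assms(2,3) by simp
  next
    case (right_scattered t)
    have "sigma T t \<le> Sup T" using sigma_in[OF closed_T] le_Sup_T right_scattered by blast
    then have "t \<in> Tkappa T" using less_Sup_in_Tkappa right_scattered by force
    then show ?case using vanishes_at_sigma right_scattered by blast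
  next
    case (right_dense t)
    then obtain u where "u \<in> T" "t < u" by blast
    then have "t < Sup T" using le_Sup_T by force
    then have "t < \<beta>" using right_dense_less_\<beta> right_dense by blast
    moreover have "w t = 0" using right_dense \<open>t < \<beta>\<close> by (simp add: Tkappa_eq)
    ultimately obtain h where "h > 0" "\<forall>s\<in>T. t < s \<and> s < t + h \<longrightarrow> z s = 0 \<and> w s = 0"
      using vanishes_right_neighbourhood right_dense by blast
    then show ?case by blast
  next
    case (left_dense t)
    have "t \<in> Tkappa T" using left_dense left_dense_in_Tkappa by blast
    then have "t \<in> Tkappa (Tkappa T)" using left_dense left_dense_in_Tkappa2 by blast
    moreover have "t islimpt {s\<in>T. a \<le> s \<and> s < t}"
      using left_dense_islimpt left_dense \<open>a \<in> T\<close> by blast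
    moreover have "{s\<in>T. a \<le> s \<and> s < t} \<subseteq> Tkappa T"
      using \<open>t \<in> Tkappa T\<close> by (auto simp: Tkappa_eq)
    ultimately show ?case using vanishes_at_limit left_dense by blast
  qed
qed

lemma vanishes_backward:
  assumes "a \<in> Tkappa T" "z a = 0" "w a = 0" "t \<in> T" "t \<le> a"
  shows "z t = 0 \<and> w t = 0"
proof -
  have "a \<in> T" "a \<le> \<beta>" using assms(1) by (auto simp: Tkappa_eq)
  have "z t = 0 \<and> (t \<in> Tkappa T \<longrightarrow> w t = 0)"
    using closed_T \<open>a \<in> T\<close> assms(4,5)
  proof (induction t rule: time_scale_induct_backward)
    case start
    then show ?case using assms(2,3) by simp
  next
    case (left_scattered t)
    then have "t \<in> Tkappa T" using \<open>a \<le> \<beta>\<close> by (simp add: Tkappa_eq)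
    then show ?case using vanishes_at_rho left_scattered by blast
  next
    case (left_dense t)
    then have "t \<in> Tkappa T" using \<open>a \<le> \<beta>\<close> by (simp add: Tkappa_eq)
    then obtain h where "h > 0" "\<forall>s\<in>T. t - h < s \<and> s < t \<longrightarrow> z s = 0 \<and> w s = 0"
      using vanishes_left_neighbourhood left_dense by force
    then show ?case by blast
  next
    case (right_dense t)
    have "t \<in> Tkappa (Tkappa T)" using right_dense \<open>a \<le> \<beta>\<close> less_\<beta>_in_Tkappa2 by simp
    moreover have "t islimpt {s\<in>T. t < s \<and> s \<le> a}"
      using right_dense_islimpt right_dense \<open>a \<in> T\<close> by blast
    moreover have "{s\<in>T. t < s \<and> s \<le> a} \<subseteq> Tkappa T"
      using \<open>a \<le> \<beta>\<close> by (auto simp: Tkappa_eq)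
    ultimately show ?case using vanishes_at_limit right_dense by blast
  qed
  then show ?thesis using assms(4,5) \<open>a \<le> \<beta>\<close> by (simp add: Tkappa_eq)
qed

lemma vanishes:
  assumes "a \<in> Tkappa T" "z a = 0" "w a = 0"
  shows "t \<in> T \<Longrightarrow> z t = 0" and "t \<in> Tkappa T \<Longrightarrow> w t = 0"
  using vanishes_forward[OF assms] vanishes_backward[OF assms] Tkappa_subset
  by (metis linear subsetD)+

end

section \<open>The boundary value problem\<close>

locale nondegenerate_time_scale = bounded_time_scale +
  assumes Inf_neq_\<beta>: "Inf T \<noteq> rho T (Sup T)"
begin

lemma delta_deriv_T_eqI: "has_delta_derivative T f D t \<Longrightarrow> delta_deriv T f t = D"
  using delta_deriv_eqI Inf_in_T \<beta>_in_T Inf_neq_\<beta> by metis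

lemma delta_deriv_Tkappa_eqI: "has_delta_derivative (Tkappa T) f D t \<Longrightarrow> delta_deriv (Tkappa T) f t = D"
  using delta_deriv_eqI Inf_in_Tkappa \<beta>_in_Tkappa Inf_neq_\<beta> by metis

lemma solution_has_delta_derivative:
  "is_solution T q a lam y \<Longrightarrow> t \<in> Tkappa T \<Longrightarrow> has_delta_derivative T y (delta_deriv T y t) t"
  unfolding is_solution_def using delta_deriv_T_eqI by blast

lemma solution_has_second_delta_derivative:
  "is_solution T q a lam y \<Longrightarrow> t \<in> Tkappa (Tkappa T) \<Longrightarrow>
    has_delta_derivative (Tkappa T) (delta_deriv T y) (delta_deriv (Tkappa T) (delta_deriv T y) t) t"
  unfolding is_solution_def using delta_deriv_Tkappa_eqI by blast

lemma
  assumes y1: "is_solution T q a lam y1" and y2: "is_solution T q a lam y2"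
  shows solution_lincomb: "is_solution T q a lam (\<lambda>x. c1 * y1 x + c2 * y2 x)"
    and delta_deriv_lincomb: "t \<in> Tkappa T \<Longrightarrow>
      delta_deriv T (\<lambda>x. c1 * y1 x + c2 * y2 x) t = c1 * delta_deriv T y1 t + c2 * delta_deriv T y2 t"
proof -
  let ?y = "\<lambda>x. c1 * y1 x + c2 * y2 x"
  have dy: "has_delta_derivative T ?y (c1 * delta_deriv T y1 t + c2 * delta_deriv T y2 t) t"
    if "t \<in> Tkappa T" for t
    using has_delta_derivative_lincomb solution_has_delta_derivative y1 y2 that by blast
  then show dd: "delta_deriv T ?y t = c1 * delta_deriv T y1 t + c2 * delta_deriv T y2 t"
    if "t \<in> Tkappa T" for t
    using that delta_deriv_T_eqI by blast
  have ddy: "has_delta_derivative (Tkappa T) (delta_deriv T ?y)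
      (c1 * delta_deriv (Tkappa T) (delta_deriv T y1) t + c2 * delta_deriv (Tkappa T) (delta_deriv T y2) t) t"
    if "t \<in> Tkappa (Tkappa T)" for t
    using has_delta_derivative_lincomb[OF solution_has_second_delta_derivative[OF y1 that]
        solution_has_second_delta_derivative[OF y2 that]]
    by (subst has_delta_derivative_cong[OF closed_Tkappa dd])
  show "is_solution T q a lam ?y"
    unfolding is_solution_def
  proof (intro conjI ballI)
    fix t assume "t \<in> Tkappa (Tkappa T)"
    then show "- delta_deriv (Tkappa T) (delta_deriv T ?y) t + complex_of_real (q t) * ?y a = lam * ?y (sigma T t)"
      using y1 y2 delta_deriv_Tkappa_eqI[OF ddy] unfolding is_solution_def
      by (simp add: algebra_simps)
  qed (use dy ddy in blast)+
qed

lemma bform_lincomb: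
  assumes "is_solution T q a lam y1" "is_solution T q a lam y2"
  shows "bform T c11 c12 c21 c22 (\<lambda>x. c1 * y1 x + c2 * y2 x)
    = c1 * bform T c11 c12 c21 c22 y1 + c2 * bform T c11 c12 c21 c22 y2"
  using delta_deriv_lincomb[OF assms Inf_in_Tkappa] delta_deriv_lincomb[OF assms \<beta>_in_Tkappa]
  by (simp add: bform_def algebra_simps)

lemma solution_vanishes:
  assumes "is_solution T q a lam y" "a \<in> Tkappa T" "y a = 0" "delta_deriv T y a = 0" "t \<in> T"
  shows "y t = 0"
proof -
  interpret homogeneous_system T y "delta_deriv T y" lam
  proof
    show "has_delta_derivative T y (delta_deriv T y t) t" if "t \<in> Tkappa T" for t
      using solution_has_delta_derivative[OF assms(1) that] .
    show "has_delta_derivative (Tkappa T) (delta_deriv T y) (- lam * y (sigma T t)) t"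
      if "t \<in> Tkappa (Tkappa T)" for t
      using solution_has_second_delta_derivative[OF assms(1) that] assms(1,3) that
      by (auto simp: is_solution_def minus_equation_iff)
  qed
  show ?thesis using vanishes assms(2-5) by blast
qed

lemma solution_nontrivial_iff:
  assumes "is_solution T q a lam y" "a \<in> Tkappa T"
  shows "(\<exists>t\<in>T. y t \<noteq> 0) \<longleftrightarrow> y a \<noteq> 0 \<or> delta_deriv T y a \<noteq> 0"
proof
  assume "\<exists>t\<in>T. y t \<noteq> 0"
  then show "y a \<noteq> 0 \<or> delta_deriv T y a \<noteq> 0" using solution_vanishes assms by blast
next
  assume "y a \<noteq> 0 \<or> delta_deriv T y a \<noteq> 0"
  show "\<exists>t\<in>T. y t \<noteq> 0"
  proof (rule ccontr)
    assume "\<not> (\<exists>t\<in>T. y t \<noteq> 0)"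
    then have "\<And>t. t \<in> T \<Longrightarrow> y t = 0" by blast
    moreover have "has_delta_derivative T (\<lambda>_. 0) 0 a"
      using assms(2) by (auto simp: has_delta_derivative_def)
    ultimately have "delta_deriv T y a = 0"
      using delta_deriv_cong[OF closed_T, of y "\<lambda>_. 0"] delta_deriv_T_eqI by metis
    moreover have "y a = 0" using \<open>\<And>t. t \<in> T \<Longrightarrow> y t = 0\<close> assms(2) Tkappa_subset by blast
    ultimately show False using \<open>y a \<noteq> 0 \<or> delta_deriv T y a \<noteq> 0\<close> by blast
  qed
qed

lemma solution_unique:
  assumes "is_solution T q a lam y1" "is_solution T q a lam y2" "a \<in> Tkappa T"
    and "y1 a = y2 a" "delta_deriv T y1 a = delta_deriv T y2 a" "t \<in> T"
  shows "y1 t = y2 t"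
  using solution_vanishes[OF solution_lincomb[OF assms(1,2), of 1 "-1"] assms(3) _ _ assms(6)]
    delta_deriv_lincomb[OF assms(1,2) assms(3), of 1 "-1"] assms(4,5)
  by simp

lemma eigenvalue_iff_kernel:
  assumes "a \<in> Tkappa T"
    and S: "is_solution T q a lam S" "S a = 0" "delta_deriv T S a = 1"
    and C: "is_solution T q a lam C" "C a = 1" "delta_deriv T C a = 0"
  shows "is_eigenvalue T q a a11 a12 a21 a22 b11 b12 b21 b22 lam \<longleftrightarrow>
    (\<exists>x w. (x \<noteq> 0 \<or> w \<noteq> 0)
      \<and> bform T a11 a12 a21 a22 C * x + bform T a11 a12 a21 a22 S * w = 0
      \<and> bform T b11 b12 b21 b22 C * x + bform T b11 b12 b21 b22 S * w = 0)"
proof -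
  define y where "y x w = (\<lambda>t. x * C t + w * S t)" for x w
  have sol: "is_solution T q a lam (y x w)" for x w
    unfolding y_def using solution_lincomb[OF C(1) S(1)] .
  have data: "y x w a = x" "delta_deriv T (y x w) a = w" for x w
    using delta_deriv_lincomb[OF C(1) S(1) assms(1)] S C by (simp_all add: y_def)
  have bform_y: "bform T c11 c12 c21 c22 (y x w) = bform T c11 c12 c21 c22 C * x + bform T c11 c12 c21 c22 S * w"
    for c11 c12 c21 c22 x w
    unfolding y_def bform_lincomb[OF C(1) S(1)] by (simp add: mult.commute)
  have "is_eigenvalue T q a a11 a12 a21 a22 b11 b12 b21 b22 lam \<longleftrightarrow>
    (\<exists>x w. (x \<noteq> 0 \<or> w \<noteq> 0) \<and> bform T a11 a12 a21 a22 (y x w) = 0 \<and> bform T b11 b12 b21 b22 (y x w) = 0)"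
  proof
    assume "is_eigenvalue T q a a11 a12 a21 a22 b11 b12 b21 b22 lam"
    then obtain u where u: "is_solution T q a lam u" "\<exists>t\<in>T. u t \<noteq> 0"
      "bform T a11 a12 a21 a22 u = 0" "bform T b11 b12 b21 b22 u = 0"
      unfolding is_eigenvalue_def by blast
    have "u t = y (u a) (delta_deriv T u a) t" if "t \<in> T" for t
      using solution_unique[OF u(1) sol assms(1)] data that by simp
    then show "\<exists>x w. (x \<noteq> 0 \<or> w \<noteq> 0) \<and> bform T a11 a12 a21 a22 (y x w) = 0 \<and> bform T b11 b12 b21 b22 (y x w) = 0"
      using u solution_nontrivial_iff[OF u(1) assms(1)] bform_cong by metis
  next
    assume "\<exists>x w. (x \<noteq> 0 \<or> w \<noteq> 0) \<and> bform T a11 a12 a21 a22 (y x w) = 0 \<and> bform T b11 b12 b21 b22 (y x w) = 0"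
    then show "is_eigenvalue T q a a11 a12 a21 a22 b11 b12 b21 b22 lam"
      unfolding is_eigenvalue_def using sol solution_nontrivial_iff[OF sol assms(1)] data by metis
  qed
  then show ?thesis by (simp add: bform_y)
qed

end

lemma det2_eq_zero_iff:
  fixes u1 u2 v1 v2 :: "'a::field"
  shows "u1 * v2 - v1 * u2 = 0 \<longleftrightarrow> (\<exists>x w. (x \<noteq> 0 \<or> w \<noteq> 0) \<and> u1 * x + u2 * w = 0 \<and> v1 * x + v2 * w = 0)"
proof
  assume det: "u1 * v2 - v1 * u2 = 0"
  show "\<exists>x w. (x \<noteq> 0 \<or> w \<noteq> 0) \<and> u1 * x + u2 * w = 0 \<and> v1 * x + v2 * w = 0"
  proof (cases "u1 = 0 \<and> u2 = 0")
    case True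
    show ?thesis
    proof (cases "v1 = 0 \<and> v2 = 0")
      case True
      with \<open>u1 = 0 \<and> u2 = 0\<close> show ?thesis by (intro exI[of _ 1] exI[of _ 0]) simp
    next
      case False
      with \<open>u1 = 0 \<and> u2 = 0\<close> show ?thesis by (intro exI[of _ v2] exI[of _ "- v1"]) (auto simp: algebra_simps)
    qed
  next
    case False
    with det show ?thesis by (intro exI[of _ u2] exI[of _ "- u1"]) (auto simp: algebra_simps)
  qed
next
  assume "\<exists>x w. (x \<noteq> 0 \<or> w \<noteq> 0) \<and> u1 * x + u2 * w = 0 \<and> v1 * x + v2 * w = 0"
  then obtain x w where "x \<noteq> 0 \<or> w \<noteq> 0" "u1 * x + u2 * w = 0" "v1 * x + v2 * w = 0" by blast
  moreover have "x * (u1 * v2 - v1 * u2) = v2 * (u1 * x + u2 * w) - u2 * (v1 * x + v2 * w)"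
    and "w * (u1 * v2 - v1 * u2) = u1 * (v1 * x + v2 * w) - v1 * (u1 * x + u2 * w)"
    by (simp_all add: algebra_simps)
  ultimately show "u1 * v2 - v1 * u2 = 0" by auto
qed

theorem theorem1:
  fixes T :: "real set" and q :: "real \<Rightarrow> real" and a :: real
    and a11 a12 a21 a22 b11 b12 b21 b22 :: real
    and S C :: "complex \<Rightarrow> real \<Rightarrow> complex"
  assumes ts: "time_scale T" and bdd: "bounded T"
    and ab: "Inf T \<noteq> rho T (Sup T)"
    and aT: "a \<in> Tkappa T"
    and qc: "continuous_on T q"
    and S_sol: "\<And>lam. is_solution T q a lam (S lam) \<and> S lam a = 0 \<and> delta_deriv T (S lam) a = 1"
    and C_sol: "\<And>lam. is_solution T q a lam (C lam) \<and> C lam a = 1 \<and> delta_deriv T (C lam) a = 0"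
  shows "\<forall>lam::complex.
           (bform T a11 a12 a21 a22 (C lam) * bform T b11 b12 b21 b22 (S lam)
            - bform T b11 b12 b21 b22 (C lam) * bform T a11 a12 a21 a22 (S lam) = 0)
           \<longleftrightarrow> is_eigenvalue T q a a11 a12 a21 a22 b11 b12 b21 b22 lam"
proof -
  interpret nondegenerate_time_scale T
    using ts bdd ab by unfold_locales (auto simp: time_scale_def)
  show ?thesis
    unfolding det2_eq_zero_iff
    using eigenvalue_iff_kernel[OF aT conjunct1[OF S_sol] _ _ conjunct1[OF C_sol]] S_sol C_sol
    by simp
qed

end
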